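(* Let $\{D'_i\}_{i\in\mathbb{Z}}$ be a stationary sequence of non-negative integer-valued random variables with $D'_i\sim G$, and connect the stubs according to the Coin Toss (CT) rule with degrees $D'_i$. If $G$ has bounded support, then the total length $T$ of all edges at the origin satisfies $\mathbb{E}[T]<\infty$.
   Context: Stationary means the law of $\{D'_i\}$ is invariant under index shifts. CT rule: attach $D'_i$ stubs $s_{i,1},\dots,s_{i,D'_i}$ to vertex $i$. For $j\ge1$ let $\Gamma_j=\{i\in\mathbb{Z}:D'_i\ge j\}$; the stubs $s_{i,j}$, $i\in\Gamma_j$, form level $j$. For each level $j$ separately (with independent fair coin tosses, independent of the degrees) the level-$j$ stubs are given directions alternating right, left, right, left, \dots along $\Gamma_j$ in increasing order, the direction of the stub at the first vertex $i\ge0$ of $\Gamma_j$ being determined by a fair coin. A level-$j$ stub at $i$ pointing right (left) is joined to the level-$j$ stub at the $(2j-1)$-th vertex of $\Gamma_j$ to the right (left) of $i$, producing an edge. The length of an edge $\{i,k\}$ is $|i-k|$; $T$ is the total length of all edges at vertex $0$. *)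

theory Defs
  imports "HOL-Probability.Probability"
begin

text \<open>Deterministic description of the Coin Toss (CT) rule, given a degree
  sequence d (vertex i has d i stubs) and a coin sequence c (c j is the coin
  for level j; c j = True means the stub at the first vertex i \<ge> 0 of level j
  points right).\<close>

definition level :: "(int \<Rightarrow> nat) \<Rightarrow> nat \<Rightarrow> int set" where
  "level d j = {i. j \<le> d i}"

definition first_nonneg :: "int set \<Rightarrow> int" where
  "first_nonneg S = (LEAST x. x \<in> S \<and> 0 \<le> x)"

definition rank :: "int set \<Rightarrow> int \<Rightarrow> int" where
  "rank S i = (let p = first_nonneg S in
     if p \<le> i then int (card {y\<in>S. p \<le> y \<and> y < i})
     else - int (card {y\<in>S. i \<le> y \<and> y < p}))"

definition points_right :: "(int \<Rightarrow> nat) \<Rightarrow> (nat \<Rightarrow> bool) \<Rightarrow> nat \<Rightarrow> int \<Rightarrow> bool" where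
  "points_right d c j i = (even (rank (level d j) i) \<longleftrightarrow> c j)"

definition kth_right :: "int set \<Rightarrow> int \<Rightarrow> nat \<Rightarrow> int option" where
  "kth_right S i k =
     (if \<exists>x\<in>S. i < x \<and> card {y\<in>S. i < y \<and> y \<le> x} = k
      then Some (THE x. x \<in> S \<and> i < x \<and> card {y\<in>S. i < y \<and> y \<le> x} = k)
      else None)"

definition kth_left :: "int set \<Rightarrow> int \<Rightarrow> nat \<Rightarrow> int option" where
  "kth_left S i k =
     (if \<exists>x\<in>S. x < i \<and> card {y\<in>S. x \<le> y \<and> y < i} = k
      then Some (THE x. x \<in> S \<and> x < i \<and> card {y\<in>S. x \<le> y \<and> y < i} = k)
      else None)"

definition partner :: "(int \<Rightarrow> nat) \<Rightarrow> (nat \<Rightarrow> bool) \<Rightarrow> nat \<Rightarrow> int \<Rightarrow> int option" where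
  "partner d c j i =
     (if points_right d c j i then kth_right (level d j) i (2*j - 1)
      else kth_left (level d j) i (2*j - 1))"

text \<open>Length of the edge formed by the level-j stub at i (0 in the degenerate,
  almost surely impossible case where no partner exists).\<close>
definition stub_length :: "(int \<Rightarrow> nat) \<Rightarrow> (nat \<Rightarrow> bool) \<Rightarrow> nat \<Rightarrow> int \<Rightarrow> nat" where
  "stub_length d c j i = (case partner d c j i of None \<Rightarrow> 0 | Some k \<Rightarrow> nat \<bar>i - k\<bar>)"

definition total_length_origin :: "(int \<Rightarrow> nat) \<Rightarrow> (nat \<Rightarrow> bool) \<Rightarrow> nat" where
  "total_length_origin d c = (\<Sum>j\<in>{1..d 0}. stub_length d c j 0)"

end

theory Submission
  imports Defs
begin

text \<open>Only the shift invariance of the degrees matters.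
  Let \<open>m = 2j - 1\<close>. If the level-\<open>j\<close> stub at 0 is joined to a vertex at distance
  \<open>L\<close> to the right, then for every \<open>0 \<le> n < L\<close> fewer than \<open>m\<close> level-\<open>j\<close> vertices
  lie in \<open>(0, n]\<close>, so \<open>L\<close> is at most the number of such \<open>n\<close>; symmetrically to the
  left. By stationarity (mass transport) the expected number of these \<open>n\<close> equals
  the expected number of \<open>n \<ge> 0\<close> for which \<open>-n\<close> is a level-\<open>j\<close> vertex with fewer
  than \<open>m\<close> level-\<open>j\<close> vertices in \<open>(-n, 0]\<close>, and in every realisation there are at
  most \<open>m\<close> of those. With degrees bounded by \<open>K\<close> this gives
  \<open>E[T] \<le> \<Sum>j\<le>K. 2(2j - 1)\<close>.\<close>

abbreviation nat_seqs :: "(int \<Rightarrow> nat) measure" where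
  "nat_seqs \<equiv> PiM UNIV (\<lambda>_. count_space UNIV)"

lemma card_Ioc_filter_less:
  fixes S :: "int set"
  assumes "a < b" "i < b" "b \<in> S"
  shows "card {y\<in>S. i < y \<and> y \<le> a} < card {y\<in>S. i < y \<and> y \<le> b}"
proof (rule psubset_card_mono)
  show "finite {y\<in>S. i < y \<and> y \<le> b}"
    by (rule finite_subset[of _ "{i..b}"]) auto
  have "b \<notin> {y\<in>S. i < y \<and> y \<le> a}" "b \<in> {y\<in>S. i < y \<and> y \<le> b}"
    using assms by auto
  moreover have "{y\<in>S. i < y \<and> y \<le> a} \<subseteq> {y\<in>S. i < y \<and> y \<le> b}"
    using assms(1) by auto
  ultimately show "{y\<in>S. i < y \<and> y \<le> a} \<subset> {y\<in>S. i < y \<and> y \<le> b}"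
    by blast
qed

lemma kth_right_eq_Some_iff:
  "kth_right S i k = Some x \<longleftrightarrow> x \<in> S \<and> i < x \<and> card {y\<in>S. i < y \<and> y \<le> x} = k"
proof -
  define P where "P x \<longleftrightarrow> x \<in> S \<and> i < x \<and> card {y\<in>S. i < y \<and> y \<le> x} = k" for x
  have unique: "a = b" if "P a" "P b" for a b
    using that card_Ioc_filter_less[of a b i S] card_Ioc_filter_less[of b a i S]
    unfolding P_def by (metis less_irrefl linorder_neqE)
  have def: "kth_right S i k = (if \<exists>x. P x then Some (THE x. P x) else None)"
    unfolding kth_right_def P_def by (simp only: Bex_def)
  have "kth_right S i k = Some x \<longleftrightarrow> P x"
  proof
    assume "kth_right S i k = Some x"
    then have "\<exists>x. P x" "x = (THE x. P x)"
      using def by (metis option.distinct(1), metis option.distinct(1) option.inject)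
    then show "P x"
      using unique by (metis theI)
  next
    assume "P x"
    then have "(THE x. P x) = x"
      using unique by (intro the_equality)
    then show "kth_right S i k = Some x"
      using def \<open>P x\<close> by auto
  qed
  then show ?thesis
    unfolding P_def .
qed

lemma kth_left_eq_kth_right_uminus:
  "kth_left S i k = map_option uminus (kth_right (uminus ` S) (- i) k)"
proof -
  define P where "P x \<longleftrightarrow> x \<in> S \<and> x < i \<and> card {y\<in>S. x \<le> y \<and> y < i} = k" for x
  have "{y\<in>uminus ` S. - i < y \<and> y \<le> - x} = uminus ` {y\<in>S. x \<le> y \<and> y < i}" for x
    by force
  then have reflect: "P x \<longleftrightarrow> kth_right (uminus ` S) (- i) k = Some (- x)" for x
    unfolding P_def kth_right_eq_Some_iff by (auto simp: card_image)
  have left: "kth_left S i k = (if \<exists>x. P x then Some (THE x. P x) else None)"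
    unfolding kth_left_def P_def by (simp only: Bex_def)
  show ?thesis
  proof (cases "\<exists>x. P x")
    case True
    then obtain x where "P x" by blast
    have "(THE x. P x) = x"
      by (rule the_equality) (use \<open>P x\<close> reflect in auto)
    then have "kth_left S i k = Some x"
      using left True by (simp only: if_True)
    then show ?thesis
      using \<open>P x\<close> reflect by simp
  next
    case False
    then have "kth_right (uminus ` S) (- i) k = None"
      using reflect by (metis minus_minus not_None_eq)
    then show ?thesis
      using left False by simp
  qed
qed

text \<open>Given \<open>0 \<in> S\<close>, this says that the \<open>m\<close>-th point of \<open>S\<close> to the right of 0
  lies beyond \<open>n\<close>.\<close>
definition kth_right_beyond :: "int set \<Rightarrow> nat \<Rightarrow> nat \<Rightarrow> bool" where
  "kth_right_beyond S m n \<longleftrightarrow> 0 \<in> S \<and> card {y\<in>S. 0 < y \<and> y \<le> int n} < m"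

lemma kth_right_distance_le_suminf:
  assumes "0 \<in> S" "kth_right S 0 m = Some x"
  shows "of_nat (nat x) \<le> (\<Sum>n. of_bool (kth_right_beyond S m n) :: ennreal)"
proof -
  have x: "x \<in> S" "card {y\<in>S. 0 < y \<and> y \<le> x} = m"
    using assms(2) by (auto simp: kth_right_eq_Some_iff)
  have "kth_right_beyond S m n" if "n < nat x" for n
    using assms(1) x card_Ioc_filter_less[of "int n" x 0 S] that
    by (simp add: kth_right_beyond_def)
  then have "of_nat (nat x) = (\<Sum>n<nat x. of_bool (kth_right_beyond S m n) :: ennreal)"
    by simp
  also have "\<dots> \<le> (\<Sum>n. of_bool (kth_right_beyond S m n))"
    by (rule sum_le_suminf) auto
  finally show ?thesis .
qed

lemma card_filter_translate:
  "card {y\<in>(\<lambda>y. y + c) ` S. P y} = card {y\<in>S. P (y + (c::int))}"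
proof -
  have "{y\<in>(\<lambda>y. y + c) ` S. P y} = (\<lambda>y. y + c) ` {y\<in>S. P (y + c)}"
    by auto
  then show ?thesis
    by (simp add: card_image inj_on_def)
qed

lemma kth_right_beyond_translate_iff:
  "kth_right_beyond ((\<lambda>y. y + int n) ` S) m n \<longleftrightarrow>
     - int n \<in> S \<and> card {y\<in>S. - int n < y \<and> y \<le> 0} < m"
proof -
  have "0 \<in> (\<lambda>y. y + int n) ` S \<longleftrightarrow> - int n \<in> S"
    by (auto intro: rev_image_eqI[of "- int n"] simp: eq_neg_iff_add_eq_0[symmetric])
  moreover have "card {y\<in>(\<lambda>y. y + int n) ` S. 0 < y \<and> y \<le> int n} = card {y\<in>S. - int n < y \<and> y \<le> 0}"
    unfolding card_filter_translate by (rule arg_cong[of _ _ card]) auto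
  ultimately show ?thesis
    unfolding kth_right_beyond_def by simp
qed

text \<open>All qualifying \<open>-n\<close> except the leftmost one are level points in
  \<open>(-N, 0]\<close> for the largest such \<open>n = N\<close>, of which there are fewer than \<open>m\<close>.\<close>
lemma card_kth_right_beyond_translates_le:
  assumes "finite A" "\<And>n. n \<in> A \<Longrightarrow> kth_right_beyond ((\<lambda>y. y + int n) ` S) m n"
  shows "card A \<le> m"
proof (cases "A = {}")
  case False
  define N where "N = Max A"
  have N: "N \<in> A" "\<And>n. n \<in> A \<Longrightarrow> n \<le> N"
    using False assms(1) by (auto simp: N_def)
  have beyond: "- int n \<in> S" "card {y\<in>S. - int n < y \<and> y \<le> 0} < m" if "n \<in> A" for n
    using assms(2)[OF that] by (auto simp: kth_right_beyond_translate_iff)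
  have "(\<lambda>n. - int n) ` (A - {N}) \<subseteq> {y\<in>S. - int N < y \<and> y \<le> 0}"
  proof (rule image_subsetI)
    fix n
    assume "n \<in> A - {N}"
    then have "n < N" "- int n \<in> S"
      using N(2) beyond(1) by (auto simp: order_less_le)
    then show "- int n \<in> {y\<in>S. - int N < y \<and> y \<le> 0}"
      by simp
  qed
  then have "card ((\<lambda>n. - int n) ` (A - {N})) \<le> card {y\<in>S. - int N < y \<and> y \<le> 0}"
    by (rule card_mono[rotated]) (rule finite_subset[of _ "{- int N..0}"], auto)
  also have "\<dots> < m"
    using beyond(2) N(1) .
  finally have "card (A - {N}) < m"
    by (simp add: card_image inj_on_def)
  then show ?thesis
    using card_Suc_Diff1[OF assms(1) N(1)] by simp
qed simp

lemma suminf_kth_right_beyond_translates_le: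
  "(\<Sum>n. of_bool (kth_right_beyond ((\<lambda>y. y + int n) ` S) m n) :: ennreal) \<le> of_nat m"
proof (rule suminf_le_const)
  fix N
  let ?A = "{..<N} \<inter> {n. kth_right_beyond ((\<lambda>y. y + int n) ` S) m n}"
  have "card ?A \<le> m"
    by (rule card_kth_right_beyond_translates_le) auto
  then show "(\<Sum>n<N. of_bool (kth_right_beyond ((\<lambda>y. y + int n) ` S) m n) :: ennreal) \<le> of_nat m"
    by (simp only: sum_of_bool_eq finite_lessThan of_nat_le_iff)
qed simp

lemma level_translate: "level (\<lambda>i. d (i - k)) j = (\<lambda>y. y + k) ` level d j"
proof (rule set_eqI)
  fix i
  show "i \<in> level (\<lambda>i. d (i - k)) j \<longleftrightarrow> i \<in> (\<lambda>y. y + k) ` level d j"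
    using image_eqI[of i "\<lambda>y. y + k" "i - k"] by (auto simp: level_def)
qed

lemma level_reflect: "level (\<lambda>i. d (- i)) j = uminus ` level d j"
proof (rule set_eqI)
  fix i
  show "i \<in> level (\<lambda>i. d (- i)) j \<longleftrightarrow> i \<in> uminus ` level d j"
    using image_eqI[of i uminus "- i"] by (auto simp: level_def)
qed

lemma measurable_kth_right_beyond_level [measurable]:
  "Measurable.pred nat_seqs (\<lambda>d. kth_right_beyond (level d j) m n)"
proof -
  have "{y\<in>{i. j \<le> d i}. 0 < y \<and> y \<le> int n} = {1..int n} \<inter> {y. j \<le> d y}" for d
    by auto
  then have eq: "(\<lambda>d. kth_right_beyond (level d j) m n) =
      (\<lambda>d. j \<le> d 0 \<and> (\<Sum>y\<in>{1..int n}. of_bool (j \<le> d y) :: nat) < m)"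
    by (simp add: kth_right_beyond_def level_def)
  show ?thesis
    unfolding eq by measurable
qed

text \<open>One summand for each direction the level-\<open>j\<close> stub at 0 may point.\<close>
definition stub_length_bound :: "(int \<Rightarrow> nat) \<Rightarrow> nat \<Rightarrow> ennreal" where
  "stub_length_bound d j =
     (\<Sum>n. of_bool (kth_right_beyond (level d j) (2*j - 1) n)) +
     (\<Sum>n. of_bool (kth_right_beyond (level (\<lambda>i. d (- i)) j) (2*j - 1) n))"

lemma stub_length_le_bound:
  assumes "j \<le> d 0"
  shows "of_nat (stub_length d c j 0) \<le> stub_length_bound d j"
proof (cases "partner d c j 0")
  case (Some x)
  have "0 \<in> level d j" "0 \<in> level (\<lambda>i. d (- i)) j"
    using assms by (auto simp: level_def)
  show ?thesis
  proof (cases "points_right d c j 0")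
    case True
    then have right: "kth_right (level d j) 0 (2*j - 1) = Some x"
      using Some by (simp add: partner_def)
    then have "of_nat (stub_length d c j 0) = (of_nat (nat x) :: ennreal)"
      using Some by (simp add: stub_length_def kth_right_eq_Some_iff)
    also have "\<dots> \<le> (\<Sum>n. of_bool (kth_right_beyond (level d j) (2*j - 1) n))"
      by (rule kth_right_distance_le_suminf[OF \<open>0 \<in> level d j\<close> right])
    also have "\<dots> \<le> stub_length_bound d j"
      unfolding stub_length_bound_def by (rule add_increasing2) simp_all
    finally show ?thesis .
  next
    case False
    then have left: "kth_right (level (\<lambda>i. d (- i)) j) 0 (2*j - 1) = Some (- x)"
      using Some by (auto simp: partner_def kth_left_eq_kth_right_uminus level_reflect)
    then have "of_nat (stub_length d c j 0) = (of_nat (nat (- x)) :: ennreal)"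
      using Some by (simp add: stub_length_def kth_right_eq_Some_iff)
    also have "\<dots> \<le> (\<Sum>n. of_bool (kth_right_beyond (level (\<lambda>i. d (- i)) j) (2*j - 1) n))"
      by (rule kth_right_distance_le_suminf[OF \<open>0 \<in> level (\<lambda>i. d (- i)) j\<close> left])
    also have "\<dots> \<le> stub_length_bound d j"
      unfolding stub_length_bound_def by (rule add_increasing) simp_all
    finally show ?thesis .
  qed
qed (simp add: stub_length_def)

lemma total_length_origin_le_bound:
  assumes "d 0 \<le> K"
  shows "ennreal (real (total_length_origin d c)) \<le> (\<Sum>j\<in>{1..K}. stub_length_bound d j)"
proof -
  have "ennreal (real (total_length_origin d c)) = of_nat (\<Sum>j\<in>{1..d 0}. stub_length d c j 0)"
    by (simp add: total_length_origin_def ennreal_of_nat_eq_real_of_nat)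
  also have "\<dots> = (\<Sum>j\<in>{1..d 0}. of_nat (stub_length d c j 0))"
    by (rule of_nat_sum)
  also have "\<dots> \<le> (\<Sum>j\<in>{1..d 0}. stub_length_bound d j)"
    by (rule sum_mono) (simp add: stub_length_le_bound)
  also have "\<dots> \<le> (\<Sum>j\<in>{1..K}. stub_length_bound d j)"
    by (rule sum_mono2) (use assms in auto)
  finally show ?thesis .
qed

lemma measurable_reflect [measurable]: "(\<lambda>d i. d (- i)) \<in> nat_seqs \<rightarrow>\<^sub>M nat_seqs"
  by (rule measurable_PiM_single') simp_all

lemma measurable_stub_length_bound: "(\<lambda>d. stub_length_bound d j) \<in> borel_measurable nat_seqs"
  unfolding stub_length_bound_def by measurable

lemma measurable_reindexed_seq:
  assumes "\<And>i. D i \<in> M \<rightarrow>\<^sub>M count_space UNIV"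
  shows "(\<lambda>\<omega> i. D (f i) \<omega>) \<in> M \<rightarrow>\<^sub>M nat_seqs"
  by (rule measurable_PiM_single') (simp_all add: assms)

definition stationary_seq :: "'a measure \<Rightarrow> (int \<Rightarrow> 'a \<Rightarrow> nat) \<Rightarrow> bool" where
  "stationary_seq M D \<longleftrightarrow>
     (\<forall>k. distr M nat_seqs (\<lambda>\<omega> i. D (i + k) \<omega>) = distr M nat_seqs (\<lambda>\<omega> i. D i \<omega>))"

lemma stationary_seqD:
  "stationary_seq M D \<Longrightarrow> distr M nat_seqs (\<lambda>\<omega> i. D (i + k) \<omega>) = distr M nat_seqs (\<lambda>\<omega> i. D i \<omega>)"
  unfolding stationary_seq_def by blast

lemma stationary_seq_reflect:
  assumes D_meas: "\<And>i. D i \<in> M \<rightarrow>\<^sub>M count_space UNIV" and "stationary_seq M D"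
  shows "stationary_seq M (\<lambda>i. D (- i))"
  unfolding stationary_seq_def
proof (intro allI)
  fix k
  have reflect_translate:
    "distr (distr M nat_seqs (\<lambda>\<omega> i. D (i + l) \<omega>)) nat_seqs (\<lambda>d i. d (- i))
      = distr M nat_seqs (\<lambda>\<omega> i. D (- i + l) \<omega>)" for l
  proof -
    have "(\<lambda>\<omega> i. D (i + l) \<omega>) \<in> M \<rightarrow>\<^sub>M nat_seqs"
      by (rule measurable_reindexed_seq) (rule D_meas)
    then show ?thesis
      by (simp add: distr_distr[OF measurable_reflect] comp_def)
  qed
  have "distr M nat_seqs (\<lambda>\<omega> i. D (- (i + k)) \<omega>)
      = distr (distr M nat_seqs (\<lambda>\<omega> i. D (i + - k) \<omega>)) nat_seqs (\<lambda>d i. d (- i))"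
    using reflect_translate[of "- k"] by simp
  also have "\<dots> = distr (distr M nat_seqs (\<lambda>\<omega> i. D i \<omega>)) nat_seqs (\<lambda>d i. d (- i))"
    by (simp only: stationary_seqD[OF \<open>stationary_seq M D\<close>])
  also have "\<dots> = distr M nat_seqs (\<lambda>\<omega> i. D (- i) \<omega>)"
    using reflect_translate[of 0] by simp
  finally show "distr M nat_seqs (\<lambda>\<omega> i. D (- (i + k)) \<omega>) = distr M nat_seqs (\<lambda>\<omega> i. D (- i) \<omega>)" .
qed

lemma nn_integral_stationary_translate:
  assumes D_meas: "\<And>i. D i \<in> M \<rightarrow>\<^sub>M count_space UNIV" and "stationary_seq M D"
    and h: "h \<in> borel_measurable nat_seqs"
  shows "(\<integral>\<^sup>+\<omega>. h (\<lambda>i. D (i + k) \<omega>) \<partial>M) = (\<integral>\<^sup>+\<omega>. h (\<lambda>i. D i \<omega>) \<partial>M)"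
proof -
  have D_translate_meas: "(\<lambda>\<omega> i. D (i + k) \<omega>) \<in> M \<rightarrow>\<^sub>M nat_seqs" for k
    by (rule measurable_reindexed_seq) (rule D_meas)
  have "(\<integral>\<^sup>+\<omega>. h (\<lambda>i. D (i + k) \<omega>) \<partial>M) = integral\<^sup>N (distr M nat_seqs (\<lambda>\<omega> i. D (i + k) \<omega>)) h"
    by (rule nn_integral_distr[symmetric]) (use D_translate_meas h in auto)
  also have "\<dots> = integral\<^sup>N (distr M nat_seqs (\<lambda>\<omega> i. D i \<omega>)) h"
    by (simp only: stationary_seqD[OF \<open>stationary_seq M D\<close>])
  also have "\<dots> = (\<integral>\<^sup>+\<omega>. h (\<lambda>i. D i \<omega>) \<partial>M)"
    by (rule nn_integral_distr) (use D_translate_meas[of 0] h in auto)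
  finally show ?thesis .
qed

text \<open>Mass transport: translating the \<open>n\<close>-th summand by its own amount \<open>k n\<close>
  does not change the expectation of the sum.\<close>
lemma nn_integral_suminf_stationary_le:
  assumes "prob_space M"
    and D_meas: "\<And>i. D i \<in> M \<rightarrow>\<^sub>M count_space UNIV" and "stationary_seq M D"
    and f_meas: "\<And>n. f n \<in> borel_measurable nat_seqs"
    and bound: "\<And>\<omega>. (\<Sum>n. f n (\<lambda>i. D (i + k n) \<omega>)) \<le> B"
  shows "(\<integral>\<^sup>+\<omega>. (\<Sum>n. f n (\<lambda>i. D i \<omega>)) \<partial>M) \<le> B"
proof -
  have f_D_meas: "(\<lambda>\<omega>. f n (\<lambda>i. D (i + k) \<omega>)) \<in> borel_measurable M" for n k
    by (rule measurable_compose[OF _ f_meas], rule measurable_reindexed_seq) (rule D_meas)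
  have "(\<integral>\<^sup>+\<omega>. (\<Sum>n. f n (\<lambda>i. D i \<omega>)) \<partial>M) = (\<Sum>n. \<integral>\<^sup>+\<omega>. f n (\<lambda>i. D i \<omega>) \<partial>M)"
    using f_D_meas[where k = 0] by (simp add: nn_integral_suminf)
  also have "\<dots> = (\<Sum>n. \<integral>\<^sup>+\<omega>. f n (\<lambda>i. D (i + k n) \<omega>) \<partial>M)"
    using nn_integral_stationary_translate[OF D_meas \<open>stationary_seq M D\<close> f_meas] by simp
  also have "\<dots> = (\<integral>\<^sup>+\<omega>. (\<Sum>n. f n (\<lambda>i. D (i + k n) \<omega>)) \<partial>M)"
    by (rule nn_integral_suminf[symmetric]) (rule f_D_meas)
  also have "\<dots> \<le> (\<integral>\<^sup>+\<omega>. B \<partial>M)"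
    by (intro nn_integral_mono bound)
  also have "\<dots> = B"
    using prob_space.emeasure_space_1[OF \<open>prob_space M\<close>] by simp
  finally show ?thesis .
qed

lemma nn_integral_kth_right_beyond_le:
  assumes "prob_space M"
    and D_meas: "\<And>i. D i \<in> M \<rightarrow>\<^sub>M count_space UNIV" and "stationary_seq M D"
  shows "(\<integral>\<^sup>+\<omega>. (\<Sum>n. of_bool (kth_right_beyond (level (\<lambda>i. D i \<omega>) j) m n)) \<partial>M) \<le> of_nat m"
proof (rule nn_integral_suminf_stationary_le[OF assms, where k = "\<lambda>n. - int n"])
  fix \<omega>
  have "level (\<lambda>i. D (i + - int n) \<omega>) j = (\<lambda>y. y + int n) ` level (\<lambda>i. D i \<omega>) j" for n
    using level_translate[of "\<lambda>i. D i \<omega>" "int n" j] by simp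
  then show "(\<Sum>n. of_bool (kth_right_beyond (level (\<lambda>i. D (i + - int n) \<omega>) j) m n) :: ennreal) \<le> of_nat m"
    by (simp only: suminf_kth_right_beyond_translates_le)
qed measurable

lemma nn_integral_stub_length_bound_le:
  assumes "prob_space M"
    and D_meas: "\<And>i. D i \<in> M \<rightarrow>\<^sub>M count_space UNIV" and "stationary_seq M D"
  shows "(\<integral>\<^sup>+\<omega>. stub_length_bound (\<lambda>i. D i \<omega>) j \<partial>M) \<le> 2 * of_nat (2*j - 1)"
proof -
  let ?m = "2*j - 1"
  have D_seq_meas: "(\<lambda>\<omega> i. D i \<omega>) \<in> M \<rightarrow>\<^sub>M nat_seqs" "(\<lambda>\<omega> i. D (- i) \<omega>) \<in> M \<rightarrow>\<^sub>M nat_seqs"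
    by (rule measurable_reindexed_seq, rule D_meas)+
  have right: "(\<integral>\<^sup>+\<omega>. (\<Sum>n. of_bool (kth_right_beyond (level (\<lambda>i. D i \<omega>) j) ?m n)) \<partial>M) \<le> of_nat ?m"
    by (rule nn_integral_kth_right_beyond_le[OF assms])
  have left: "(\<integral>\<^sup>+\<omega>. (\<Sum>n. of_bool (kth_right_beyond (level (\<lambda>i. D (- i) \<omega>) j) ?m n)) \<partial>M) \<le> of_nat ?m"
    by (rule nn_integral_kth_right_beyond_le[where D = "\<lambda>i. D (- i)"])
       (fact \<open>prob_space M\<close>, rule D_meas, rule stationary_seq_reflect[OF D_meas \<open>stationary_seq M D\<close>])
  have "(\<integral>\<^sup>+\<omega>. stub_length_bound (\<lambda>i. D i \<omega>) j \<partial>M)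
      = (\<integral>\<^sup>+\<omega>. (\<Sum>n. of_bool (kth_right_beyond (level (\<lambda>i. D i \<omega>) j) ?m n)) \<partial>M)
      + (\<integral>\<^sup>+\<omega>. (\<Sum>n. of_bool (kth_right_beyond (level (\<lambda>i. D (- i) \<omega>) j) ?m n)) \<partial>M)"
    unfolding stub_length_bound_def
    by (intro nn_integral_add borel_measurable_suminf_order measurable_compose[OF D_seq_meas(1)]
        measurable_compose[OF D_seq_meas(2)]) measurable
  also have "\<dots> \<le> 2 * of_nat ?m"
    using add_mono[OF right left] by (simp add: mult_2)
  finally show ?thesis .
qed

theorem proposition2p3:
  fixes M :: "'a measure" and D :: "int \<Rightarrow> 'a \<Rightarrow> nat" and C :: "nat \<Rightarrow> 'a \<Rightarrow> bool"
  assumes "prob_space M"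
    and D_meas: "\<And>i. D i \<in> measurable M (count_space UNIV)"
    and stationary: "\<And>k::int.
      distr M (PiM UNIV (\<lambda>_::int. count_space (UNIV::nat set))) (\<lambda>\<omega> i. D (i + k) \<omega>)
      = distr M (PiM UNIV (\<lambda>_::int. count_space (UNIV::nat set))) (\<lambda>\<omega> i. D i \<omega>)"
    and bounded_support: "\<exists>K::nat. \<forall>i. AE \<omega> in M. D i \<omega> \<le> K"
    and C_meas: "\<And>j. C j \<in> measurable M (count_space UNIV)"
    and coins_iid_fair_indep_of_D:
      "distr M (PiM UNIV (\<lambda>_::int. count_space (UNIV::nat set))
                 \<Otimes>\<^sub>M PiM UNIV (\<lambda>_::nat. count_space (UNIV::bool set)))
             (\<lambda>\<omega>. (\<lambda>i. D i \<omega>, \<lambda>j. C j \<omega>))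
       = distr M (PiM UNIV (\<lambda>_::int. count_space (UNIV::nat set))) (\<lambda>\<omega> i. D i \<omega>)
         \<Otimes>\<^sub>M PiM UNIV (\<lambda>_::nat. measure_pmf (bernoulli_pmf (1/2)))"
  shows "(\<integral>\<^sup>+ \<omega>. ennreal (real (total_length_origin (\<lambda>i. D i \<omega>) (\<lambda>j. C j \<omega>))) \<partial>M) < \<infinity>"
proof -
  obtain K :: nat where "AE \<omega> in M. D 0 \<omega> \<le> K"
    using bounded_support by blast
  then have "AE \<omega> in M. ennreal (real (total_length_origin (\<lambda>i. D i \<omega>) (\<lambda>j. C j \<omega>)))
      \<le> (\<Sum>j\<in>{1..K}. stub_length_bound (\<lambda>i. D i \<omega>) j)"
    by (rule eventually_mono) (rule total_length_origin_le_bound)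
  then have "(\<integral>\<^sup>+ \<omega>. ennreal (real (total_length_origin (\<lambda>i. D i \<omega>) (\<lambda>j. C j \<omega>))) \<partial>M)
      \<le> (\<integral>\<^sup>+ \<omega>. (\<Sum>j\<in>{1..K}. stub_length_bound (\<lambda>i. D i \<omega>) j) \<partial>M)"
    by (rule nn_integral_mono_AE)
  also have "\<dots> = (\<Sum>j\<in>{1..K}. \<integral>\<^sup>+ \<omega>. stub_length_bound (\<lambda>i. D i \<omega>) j \<partial>M)"
    by (intro nn_integral_sum measurable_compose[OF _ measurable_stub_length_bound]
        measurable_reindexed_seq D_meas)
  also have "\<dots> \<le> (\<Sum>j\<in>{1..K}. 2 * of_nat (2*j - 1))"
    by (intro sum_mono nn_integral_stub_length_bound_le[OF \<open>prob_space M\<close> D_meas])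
       (simp add: stationary_seq_def stationary)
  also have "\<dots> < \<infinity>"
    by (simp add: ennreal_mult_less_top of_nat_less_top)
  finally show ?thesis .
qed

end
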